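(* Let $\tau>0$, let $u_\tau:\mathbb{R}^d\to\mathbb{R}$ be a ($\mathbb{Z}^d$-periodic, continuous) solution of the discrete Lax--Oleinik equation \[ u_\tau(y)+\bar L(\tau)\,\tau=\inf_{x\in\mathbb{R}^d}\bigl(u_\tau(x)+\mathcal L_\tau(x,y)\bigr)\qquad\forall y, \] and let $\{x_n\}_{n\le 0}$ be a calibrated backward configuration for $u_\tau$. Define the discrete velocities $v_n:=\frac{x_{n+1}-x_n}{\tau}$. Then there exists a constant $D>0$, depending only on the Lagrangian $L$, such that $|v_n|\le D$ for all $n\le -1$.
   Context: $\mathbb{T}^d=\mathbb{R}^d/\mathbb{Z}^d$; functions on $\mathbb{T}^d$ are identified with $\mathbb{Z}^d$-periodic functions on $\mathbb{R}^d$. $H:\mathbb{T}^d\times\mathbb{R}^d\to\mathbb{R}$ is a Tonelli Hamiltonian: $H\in C^2$, $D^2_{pp}H(x,p)$ is positive definite for all $(x,p)$, and for every $K>0$ there is $C(K)\in\mathbb{R}$ with $H(x,p)\ge K|p|+C(K)$. $L(x,v)=\sup_{p}\{p\cdot v-H(x,p)\}$ is its Legendre transform (so $L$ is $C^2$, strictly convex in $v$, and superlinear: for every $K>0$ there is $C(K)$ with $L(x,v)\ge K|v|+C(K)$). For $\tau>0$ set $\mathcal L_\tau(x,y):=\tau L\bigl(x,\frac{y-x}{\tau}\bigr)$. It is known that for each $\tau>0$ there is a unique constant $\bar L(\tau)\in\mathbb{R}$ for which the discrete Lax--Oleinik equation above has a continuous periodic solution $u_\tau$, that such solutions are Lipschitz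 with a constant independent of $\tau$, and that $\bar L(\tau)\to-\alpha(H)$ as $\tau\to0$, where $\alpha(H)$ is the unique constant such that $H(x,Du)=\alpha(H)$ has a viscosity solution on $\mathbb{T}^d$. A calibrated (backward) configuration for $u_\tau$ (through $x$) is a sequence $\{x_{-k}\}_{k\ge0}$ with $x_0=x$ and $u_\tau(x_{-k})+\tau\bar L(\tau)=u_\tau(x_{-k-1})+\mathcal L_\tau(x_{-k-1},x_{-k})$ for all $k\ge0$. *)

theory Defs
  imports "HOL-Analysis.Analysis"
begin

definition int_vec :: "real^'d \<Rightarrow> bool" where
  "int_vec k \<longleftrightarrow> (\<forall>i. k $ i \<in> \<int>)"

definition Zd_periodic :: "(real^'d \<Rightarrow> 'b) \<Rightarrow> bool" where
  "Zd_periodic f \<longleftrightarrow> (\<forall>x k. int_vec k \<longrightarrow> f (x + k) = f x)"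

definition C2 :: "('a::real_normed_vector \<Rightarrow> real) \<Rightarrow> ('a \<Rightarrow> 'a \<Rightarrow>\<^sub>L real) \<Rightarrow> ('a \<Rightarrow> 'a \<Rightarrow>\<^sub>L 'a \<Rightarrow>\<^sub>L real) \<Rightarrow> bool" where
  "C2 f f' f'' \<longleftrightarrow> (\<forall>z. (f has_derivative blinfun_apply (f' z)) (at z))
                  \<and> (\<forall>z. (f' has_derivative blinfun_apply (f'' z)) (at z))
                  \<and> continuous_on UNIV f''"

text \<open>Tonelli Hamiltonian H(x,p) on T^d x R^d (as a Z^d-periodic function in x).\<close>
definition tonelli :: "(real^'d \<Rightarrow> real^'d \<Rightarrow> real) \<Rightarrow> bool" where
  "tonelli H \<longleftrightarrow>
     (\<forall>p. Zd_periodic (\<lambda>x. H x p))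
   \<and> (\<exists>f' f''. C2 (\<lambda>z. H (fst z) (snd z)) f' f''
        \<and> (\<forall>z w. w \<noteq> 0 \<longrightarrow> blinfun_apply (blinfun_apply (f'' z) (0, w)) (0, w) > 0))
   \<and> (\<forall>K>0. \<exists>C. \<forall>x p. H x p \<ge> K * norm p + C)"

definition lagrangian :: "(real^'d \<Rightarrow> real^'d \<Rightarrow> real) \<Rightarrow> real^'d \<Rightarrow> real^'d \<Rightarrow> real" where
  "lagrangian H x v = (SUP p. p \<bullet> v - H x p)"

definition action :: "(real^'d \<Rightarrow> real^'d \<Rightarrow> real) \<Rightarrow> real \<Rightarrow> real^'d \<Rightarrow> real^'d \<Rightarrow> real" where
  "action H \<tau> x y = \<tau> * lagrangian H x ((1 / \<tau>) *\<^sub>R (y - x))"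

text \<open>u solves the discrete Lax-Oleinik equation with constant c (= Lbar(tau)).\<close>
definition discrete_LO_solution :: "(real^'d \<Rightarrow> real^'d \<Rightarrow> real) \<Rightarrow> real \<Rightarrow> real \<Rightarrow> (real^'d \<Rightarrow> real) \<Rightarrow> bool" where
  "discrete_LO_solution H \<tau> c u \<longleftrightarrow>
     continuous_on UNIV u \<and> Zd_periodic u \<and>
     (\<forall>y. u y + c * \<tau> = (INF x. u x + action H \<tau> x y))"

text \<open>Calibrated backward configuration: xs k stands for x_{-k}.\<close>
definition calibrated :: "(real^'d \<Rightarrow> real^'d \<Rightarrow> real) \<Rightarrow> real \<Rightarrow> real \<Rightarrow> (real^'d \<Rightarrow> real) \<Rightarrow> (nat \<Rightarrow> real^'d) \<Rightarrow> bool" where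
  "calibrated H \<tau> c u xs \<longleftrightarrow>
     (\<forall>k. u (xs k) + \<tau> * c = u (xs (Suc k)) + action H \<tau> (xs (Suc k)) (xs k))"

end

theory Submission
  imports Defs
begin

text \<open>
  Let \<open>A\<close> bound \<open>L\<close> on the unit ball of velocities. The Lax-Oleinik inequality
  \<open>u y + c\<tau> \<le> u x + \<tau> L(x, (y - x)/\<tau>)\<close>, applied along a chain of steps of length at most \<open>\<tau>\<close>,
  gives \<open>u y - u x \<le> (|y - x| + \<tau>)(A - c)\<close>. Along a calibrated configuration the increment of \<open>u\<close>
  is exactly \<open>\<tau>(L(x\<^sub>k\<^sub>+\<^sub>1, v\<^sub>k) - c)\<close>, hence \<open>L(x\<^sub>k\<^sub>+\<^sub>1, v\<^sub>k) \<le> (|v\<^sub>k| + 1)(A - c) + c\<close>.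
  Since \<open>inf L \<le> c \<le> A\<close> (compare infima of both sides of the equation, resp. take \<open>x = y\<close>),
  the slope \<open>A - c\<close> is bounded independently of \<open>\<tau>\<close>, and superlinearity of \<open>L\<close> bounds \<open>|v\<^sub>k|\<close>.
\<close>

lemma int_vec_translate_into_unit_cube:
  fixes x :: "real^'d"
  obtains k where "int_vec k" "x + k \<in> cbox 0 (\<chi> i. 1)"
proof
  define k :: "real^'d" where "k = (\<chi> i. - of_int \<lfloor>x $ i\<rfloor>)"
  show "int_vec k" unfolding int_vec_def k_def by simp
  have "0 \<le> x $ i - of_int \<lfloor>x $ i\<rfloor> \<and> x $ i - of_int \<lfloor>x $ i\<rfloor> \<le> 1" for i
    by linarith
  then show "x + k \<in> cbox 0 (\<chi> i. 1)"
    unfolding mem_box_cart k_def by simp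
qed

lemma Zd_periodic_range_eq:
  assumes "Zd_periodic f"
  shows "range f = f ` cbox 0 (\<chi> i. 1)"
proof (intro equalityI subsetI)
  fix y assume "y \<in> range f"
  then obtain x where "y = f x" by blast
  obtain k where k: "int_vec k" "x + k \<in> cbox 0 (\<chi> i. 1)"
    using int_vec_translate_into_unit_cube .
  have "f (x + k) = f x"
    using assms k(1) unfolding Zd_periodic_def by blast
  then show "y \<in> f ` cbox 0 (\<chi> i. 1)"
    using rev_image_eqI[OF k(2), of y f] \<open>y = f x\<close> by simp
qed blast

lemma Zd_periodic_continuous_bounded:
  fixes u :: "real^'d \<Rightarrow> 'b::metric_space"
  assumes "continuous_on UNIV u" "Zd_periodic u"
  shows "bounded (range u)"
  unfolding Zd_periodic_range_eq[OF assms(2)]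
  by (intro compact_imp_bounded compact_continuous_image compact_cbox)
     (rule continuous_on_subset[OF assms(1)], simp)

lemma tonelli_continuous:
  assumes "tonelli H"
  shows "continuous_on UNIV (\<lambda>z. H (fst z) (snd z))"
proof -
  obtain f' f'' where "C2 (\<lambda>z. H (fst z) (snd z)) f' f''"
    using assms unfolding tonelli_def by blast
  then show ?thesis
    unfolding C2_def by (meson continuous_at_imp_continuous_on has_derivative_continuous)
qed

lemma tonelli_bounded_on_cball:
  fixes H :: "real^'d \<Rightarrow> real^'d \<Rightarrow> real"
  assumes "tonelli H"
  obtains M where "\<And>x p. norm p \<le> K \<Longrightarrow> \<bar>H x p\<bar> \<le> M"
proof -
  let ?Q = "cbox 0 (\<chi> i. 1) \<times> cball (0::real^'d) K"
  have "compact ((\<lambda>z. H (fst z) (snd z)) ` ?Q)"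
    by (intro compact_continuous_image compact_Times compact_cbox compact_cball
        continuous_on_subset[OF tonelli_continuous[OF assms]]) simp
  then obtain M where M: "\<And>y. y \<in> (\<lambda>z. H (fst z) (snd z)) ` ?Q \<Longrightarrow> \<bar>y\<bar> \<le> M"
    unfolding bounded_real[symmetric] by (meson compact_imp_bounded bounded_real)
  have "\<bar>H x p\<bar> \<le> M" if "norm p \<le> K" for x p
  proof -
    obtain k where k: "int_vec k" "x + k \<in> cbox 0 (\<chi> i. 1)"
      using int_vec_translate_into_unit_cube .
    have "H (x + k) p = H x p"
      using assms k(1) unfolding tonelli_def Zd_periodic_def by blast
    moreover have "(x + k, p) \<in> ?Q" using k(2) that by simp
    ultimately show ?thesis using M[OF imageI[of "(x + k, p)"]] by simp
  qed
  then show ?thesis using that by blast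
qed

lemma tonelli_linear_lower_bound:
  assumes "tonelli H"
  obtains C where "\<And>x p. K * norm p + C \<le> H x p"
proof -
  have "\<forall>K>0. \<exists>C. \<forall>x p. K * norm p + C \<le> H x p"
    using assms unfolding tonelli_def by blast
  then obtain C where C: "\<And>x p. (\<bar>K\<bar> + 1) * norm p + C \<le> H x p"
    by (metis add_nonneg_pos abs_ge_zero zero_less_one)
  have "K * norm p + C \<le> H x p" for x p
  proof -
    have "K * norm p \<le> (\<bar>K\<bar> + 1) * norm p"
      by (intro mult_right_mono) auto
    then show ?thesis using C[of p x] by linarith
  qed
  then show ?thesis using that by blast
qed

lemma lagrangian_fenchel_young:
  fixes H :: "real^'d \<Rightarrow> real^'d \<Rightarrow> real"
  assumes "tonelli H"
  shows "p \<bullet> v - H x p \<le> lagrangian H x v"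
proof -
  obtain C where C: "\<And>x p. norm v * norm p + C \<le> H x p"
    using tonelli_linear_lower_bound[OF assms, where K = "norm v"] by blast
  have "q \<bullet> v - H x q \<le> - C" for q
    using norm_cauchy_schwarz[of q v] C[where x = x and p = q] mult.commute[of "norm q" "norm v"]
    by linarith
  then have "bdd_above (range (\<lambda>q. q \<bullet> v - H x q))"
    by (intro bdd_aboveI2)
  then show ?thesis
    unfolding lagrangian_def by (rule cSUP_upper[OF UNIV_I])
qed

lemma lagrangian_bounded_on_unit_ball:
  fixes H :: "real^'d \<Rightarrow> real^'d \<Rightarrow> real"
  assumes "tonelli H"
  obtains A where "\<And>x v. norm v \<le> 1 \<Longrightarrow> lagrangian H x v \<le> A"
proof -
  obtain C where C: "\<And>x p. 1 * norm p + C \<le> H x p"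
    using tonelli_linear_lower_bound[OF assms, where K = 1] by blast
  have "lagrangian H x v \<le> - C" if "norm v \<le> 1" for x v
    unfolding lagrangian_def
  proof (rule cSUP_least)
    fix p
    have "p \<bullet> v \<le> norm p"
      using norm_cauchy_schwarz[of p v] mult_left_le[OF that, of "norm p"] by simp
    then show "p \<bullet> v - H x p \<le> - C" using C[where x = x and p = p] by linarith
  qed simp
  then show ?thesis using that by blast
qed

lemma lagrangian_superlinear:
  fixes H :: "real^'d \<Rightarrow> real^'d \<Rightarrow> real"
  assumes "tonelli H" "K \<ge> 0"
  obtains M where "\<And>x v. K * norm v - M \<le> lagrangian H x v"
proof -
  obtain M where M: "\<And>x p. norm p \<le> K \<Longrightarrow> \<bar>H x p\<bar> \<le> M"
    using tonelli_bounded_on_cball[OF assms(1), where K = K] by blast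
  have "K * norm v - M \<le> lagrangian H x v" for x v
  proof -
    define p where "p = (K / norm v) *\<^sub>R v"
    have "norm p \<le> K" unfolding p_def using assms(2) by auto
    moreover have "p \<bullet> v = K * norm v"
      unfolding p_def by (cases "v = 0") (auto simp: power2_norm_eq_inner[symmetric] power2_eq_square)
    ultimately show ?thesis
      using lagrangian_fenchel_young[OF assms(1), of p v x] M[where x = x and p = p] by linarith
  qed
  then show ?thesis using that by blast
qed

lemma lagrangian_bounded_below:
  fixes H :: "real^'d \<Rightarrow> real^'d \<Rightarrow> real"
  assumes "tonelli H"
  obtains m where "\<And>x v. - m \<le> lagrangian H x v"
proof -
  obtain m where m: "\<And>x v. 0 * norm v - m \<le> lagrangian H x v"
    using lagrangian_superlinear[OF assms, where K = 0] by blast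
  show ?thesis using m by (intro that[of m]) simp
qed

lemma split_segment_norm:
  fixes a b :: "'a::real_normed_vector"
  assumes "norm (a - b) \<le> s + t" "s \<ge> 0" "t \<ge> 0"
  obtains m where "norm (a - m) \<le> s" "norm (m - b) \<le> t"
proof (cases "s + t = 0")
  case True
  with assms show ?thesis using that[of a] by simp
next
  case False
  with assms have st: "s + t > 0" by linarith
  have scaled_le: "r / (s + t) * norm (a - b) \<le> r" if "r \<ge> 0" for r
    using mult_left_mono[OF assms(1), of "r / (s + t)"] that st by simp
  define m where "m = b + (t / (s + t)) *\<^sub>R (a - b)"
  have "a - m = (1 - t / (s + t)) *\<^sub>R (a - b)"
    unfolding m_def by (simp add: scaleR_diff_left algebra_simps)
  also have "1 - t / (s + t) = s / (s + t)"
    using st by (simp add: field_simps)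
  finally have "norm (a - m) \<le> s"
    using scaled_le[OF assms(2)] assms(2) st by simp
  moreover have "norm (m - b) \<le> t"
    unfolding m_def using scaled_le[OF assms(3)] assms(3) st by simp
  ultimately show ?thesis using that by blast
qed

locale discrete_LO =
  fixes H :: "real^'d \<Rightarrow> real^'d \<Rightarrow> real" and \<tau> c :: real and u :: "real^'d \<Rightarrow> real"
  assumes tonelli: "tonelli H"
    and step_pos: "\<tau> > 0"
    and solution: "discrete_LO_solution H \<tau> c u"
begin

lemma bdd_below_solution: "bdd_below (range u)"
  using solution unfolding discrete_LO_solution_def
  by (intro bounded_imp_bdd_below Zd_periodic_continuous_bounded) auto

lemma LO_equation: "u y + c * \<tau> = (INF x. u x + action H \<tau> x y)"
  using solution unfolding discrete_LO_solution_def by blast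

lemma action_lower_bound:
  assumes "\<And>x v. b \<le> lagrangian H x v"
  shows "\<tau> * b \<le> action H \<tau> x y"
  unfolding action_def using assms step_pos by (simp add: mult_left_mono)

lemma bdd_below_LO_range: "bdd_below (range (\<lambda>x. u x + action H \<tau> x y))"
proof -
  obtain m where m: "\<And>x v. - m \<le> lagrangian H x v"
    using lagrangian_bounded_below[OF tonelli] by blast
  obtain b where b: "\<And>x. b \<le> u x"
    using bdd_below_solution by (auto simp: bdd_below_def)
  have "b + \<tau> * - m \<le> u x + action H \<tau> x y" for x
    using b[of x] action_lower_bound[OF m, of x y] by linarith
  then show ?thesis by (intro bdd_belowI2)
qed

lemma LO_inequality: "u y + c * \<tau> \<le> u x + action H \<tau> x y"
  unfolding LO_equation by (rule cINF_lower[OF bdd_below_LO_range UNIV_I])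

lemma const_le_lagrangian_zero: "c \<le> lagrangian H x 0"
  using LO_inequality[of x x] step_pos unfolding action_def by (simp add: mult.commute)

lemma const_ge_lagrangian_lower_bound:
  assumes "\<And>x v. b \<le> lagrangian H x v"
  shows "b \<le> c"
proof -
  let ?m = "Inf (range u)"
  have inf_bound: "?m + \<tau> * b \<le> (INF x. u x + action H \<tau> x y)" for y
  proof (rule cINF_greatest)
    fix x
    show "?m + \<tau> * b \<le> u x + action H \<tau> x y"
      using cINF_lower[OF bdd_below_solution UNIV_I, of x] action_lower_bound[OF assms, of x y]
      by linarith
  qed simp
  have "?m + \<tau> * b - c * \<tau> \<le> u y" for y
    using inf_bound[of y] LO_equation[of y] by linarith
  then have "?m + \<tau> * b - c * \<tau> \<le> ?m"
    by (intro cINF_greatest) auto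
  then have "\<tau> * b \<le> \<tau> * c" by (simp add: mult.commute)
  then show ?thesis using step_pos by simp
qed

context
  fixes A :: real
  assumes unit_ball_bound: "\<And>x v. norm v \<le> 1 \<Longrightarrow> lagrangian H x v \<le> A"
begin

lemma short_step_increment:
  assumes "norm (y - x) \<le> \<tau>"
  shows "u y - u x \<le> \<tau> * (A - c)"
proof -
  have "norm ((1 / \<tau>) *\<^sub>R (y - x)) \<le> 1"
    using assms step_pos by (simp add: divide_le_eq)
  then have "action H \<tau> x y \<le> \<tau> * A"
    unfolding action_def using unit_ball_bound step_pos by (simp add: mult_left_mono)
  then show ?thesis using LO_inequality[of y x] by (simp add: algebra_simps)
qed

lemma increment_le_steps:
  assumes "norm (y - x) \<le> real N * \<tau>"
  shows "u y - u x \<le> real N * \<tau> * (A - c)"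
  using assms
proof (induction N arbitrary: y)
  case (Suc N)
  have split: "real (Suc N) * \<tau> = \<tau> + real N * \<tau>"
    by (simp add: distrib_right)
  obtain m where m: "norm (y - m) \<le> \<tau>" "norm (m - x) \<le> real N * \<tau>"
    using split_segment_norm[of y x \<tau> "real N * \<tau>"] Suc.prems step_pos
    unfolding split by auto
  show ?case
    using short_step_increment[OF m(1)] Suc.IH[OF m(2)] split
    by (simp add: distrib_right)
qed simp

lemma increment_bound: "u y - u x \<le> (norm (y - x) + \<tau>) * (A - c)"
proof -
  define r where "r = norm (y - x) / \<tau>"
  define N where "N = nat \<lceil>r\<rceil>"
  have "r \<ge> 0" unfolding r_def using step_pos by simp
  then have "real N = of_int \<lceil>r\<rceil>" unfolding N_def by simp
  then have "r \<le> real N" "real N \<le> r + 1"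
    using le_of_int_ceiling[of r] of_int_ceiling_le_add_one[of r] by linarith+
  then have "norm (y - x) \<le> real N * \<tau>" "real N * \<tau> \<le> norm (y - x) + \<tau>"
    unfolding r_def using step_pos by (simp_all add: field_simps)
  moreover have "c \<le> A"
    using const_le_lagrangian_zero[of 0] unit_ball_bound[of 0 0] by simp
  ultimately show ?thesis
    using increment_le_steps[of y x N] mult_right_mono[of "real N * \<tau>" "norm (y - x) + \<tau>" "A - c"]
    by linarith
qed

lemma calibrated_lagrangian_le:
  fixes xs :: "nat \<Rightarrow> real^'d" and k :: nat
  assumes "calibrated H \<tau> c u xs"
  defines "v \<equiv> (1 / \<tau>) *\<^sub>R (xs k - xs (Suc k))"
  shows "lagrangian H (xs (Suc k)) v \<le> (norm v + 1) * (A - c) + c"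
proof -
  have "u (xs k) + \<tau> * c = u (xs (Suc k)) + \<tau> * lagrangian H (xs (Suc k)) v"
    using assms(1) unfolding calibrated_def action_def v_def by blast
  moreover have "norm (xs k - xs (Suc k)) = \<tau> * norm v"
    unfolding v_def using step_pos by simp
  ultimately have "\<tau> * lagrangian H (xs (Suc k)) v \<le> \<tau> * ((norm v + 1) * (A - c) + c)"
    using increment_bound[of "xs k" "xs (Suc k)"] by (simp add: algebra_simps)
  then show ?thesis using step_pos by simp
qed

lemma calibrated_velocity_le:
  assumes "calibrated H \<tau> c u xs"
    and lower: "\<And>x v. b \<le> lagrangian H x v"
    and superlinear: "\<And>x v. K * norm v - M \<le> lagrangian H x v"
    and "K \<ge> A - b + 1"
  shows "norm ((1 / \<tau>) *\<^sub>R (xs k - xs (Suc k))) \<le> A + M"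
proof -
  define v where "v = (1 / \<tau>) *\<^sub>R (xs k - xs (Suc k))"
  have "K * norm v - M \<le> (norm v + 1) * (A - c) + c"
    using superlinear[of v "xs (Suc k)"] calibrated_lagrangian_le[OF assms(1), of k]
    unfolding v_def by linarith
  then have "norm v * (K - (A - c)) \<le> A + M"
    by (simp add: algebra_simps)
  moreover have "K - (A - c) \<ge> 1"
    using const_ge_lagrangian_lower_bound[OF lower] assms(4) by linarith
  then have "norm v \<le> norm v * (K - (A - c))"
    using mult_left_mono[of 1 "K - (A - c)" "norm v"] by simp
  ultimately show ?thesis unfolding v_def by linarith
qed

end

end

theorem lemma3p4:
  fixes H :: "real^'d \<Rightarrow> real^'d \<Rightarrow> real"
  assumes "tonelli H"
  shows "\<exists>D>0. \<forall>\<tau> c u xs. \<tau> > 0 \<and> discrete_LO_solution H \<tau> c u \<and> calibrated H \<tau> c u xs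
            \<longrightarrow> (\<forall>k. norm ((1 / \<tau>) *\<^sub>R (xs k - xs (Suc k))) \<le> D)"
proof -
  obtain A where A: "\<And>x v. norm v \<le> 1 \<Longrightarrow> lagrangian H x v \<le> A"
    using lagrangian_bounded_on_unit_ball[OF assms] by blast
  obtain m where m: "\<And>x v. - m \<le> lagrangian H x v"
    using lagrangian_bounded_below[OF assms] by blast
  define K where "K = \<bar>A\<bar> + \<bar>m\<bar> + 1"
  obtain M where M: "\<And>x v. K * norm v - M \<le> lagrangian H x v"
    using lagrangian_superlinear[OF assms, where K = K] unfolding K_def by auto
  define D where "D = \<bar>A\<bar> + \<bar>M\<bar> + 1"
  have "norm ((1 / \<tau>) *\<^sub>R (xs k - xs (Suc k))) \<le> D"
    if "\<tau> > 0" "discrete_LO_solution H \<tau> c u" "calibrated H \<tau> c u xs" for \<tau> c u xs k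
  proof -
    interpret discrete_LO H \<tau> c u using assms that by unfold_locales
    have "norm ((1 / \<tau>) *\<^sub>R (xs k - xs (Suc k))) \<le> A + M"
      using calibrated_velocity_le[OF A that(3) m M] unfolding K_def by simp
    then show ?thesis unfolding D_def by simp
  qed
  moreover have "D > 0" unfolding D_def by simp
  ultimately show ?thesis by blast
qed

end
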